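(* Let $X\overset{f}{\underset{g}{\rightrightarrows}}Y\xrightarrow{h}Z$ be a coequalizer diagram in $\mathbf{CLS}$ whose image in $\mathbf{Sets}$ is exact (i.e. $h$ is the coequalizer of $f,g$ as maps of sets and $(f,g)$ is the kernel pair of $h$ as maps of sets). If $f$ and $g$ are surjective closed maps, then $h$ is a surjective closed map; and if $f$ and $g$ are surjective open maps, then $h$ is a surjective open map.
   Context: A closure space is a pair $(A,\mathcal{C}_A)$ where $A$ is a set and $\mathcal{C}_A$ is a set of subsets of $A$ closed under arbitrary intersections (so $A\in\mathcal{C}_A$); elements of $\mathcal{C}_A$ are called closed, and their complements open. $\mathbf{CLS}$ has closure spaces as objects and, as morphisms $\alpha:A\to B$, maps with $\alpha^{-1}(B')\in\mathcal{C}_A$ for all $B'\in\mathcal{C}_B$. A morphism $p$ is closed if it maps closed sets to closed sets, and open if it maps open sets (complements of closed sets) to open sets. In a coequalizer $h$ in $\mathbf{CLS}$, $\mathcal{C}_Z=\{Z'\subseteq Z\mid h^{-1}(Z')\in\mathcal{C}_Y\}$. *)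

theory Defs
  imports Main
begin

text \<open>A closure space is a carrier set A with a family C of subsets of A closed under
  arbitrary intersections (the empty intersection being A itself).\<close>
definition closure_space :: "'a set \<Rightarrow> 'a set set \<Rightarrow> bool" where
  "closure_space A C \<longleftrightarrow> C \<subseteq> Pow A \<and> (\<forall>S. S \<subseteq> C \<longrightarrow> A \<inter> \<Inter>S \<in> C)"

definition cls_morphism :: "'a set \<Rightarrow> 'a set set \<Rightarrow> 'b set \<Rightarrow> 'b set set \<Rightarrow> ('a \<Rightarrow> 'b) \<Rightarrow> bool" where
  "cls_morphism A CA B CB \<alpha> \<longleftrightarrow>
     closure_space A CA \<and> closure_space B CB \<and>
     (\<forall>x\<in>A. \<alpha> x \<in> B) \<and> (\<forall>B'\<in>CB. {x\<in>A. \<alpha> x \<in> B'} \<in> CA)"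

definition cls_closed_map :: "'a set \<Rightarrow> 'a set set \<Rightarrow> 'b set \<Rightarrow> 'b set set \<Rightarrow> ('a \<Rightarrow> 'b) \<Rightarrow> bool" where
  "cls_closed_map A CA B CB \<alpha> \<longleftrightarrow> (\<forall>A'\<in>CA. \<alpha> ` A' \<in> CB)"

text \<open>Open map: images of open sets (complements A - A' of closed A') are open
  (i.e. their complements in B are closed).\<close>
definition cls_open_map :: "'a set \<Rightarrow> 'a set set \<Rightarrow> 'b set \<Rightarrow> 'b set set \<Rightarrow> ('a \<Rightarrow> 'b) \<Rightarrow> bool" where
  "cls_open_map A CA B CB \<alpha> \<longleftrightarrow> (\<forall>A'\<in>CA. B - \<alpha> ` (A - A') \<in> CB)"

definition set_coequalizer :: "'a set \<Rightarrow> 'b set \<Rightarrow> 'c set \<Rightarrow> ('a \<Rightarrow> 'b) \<Rightarrow> ('a \<Rightarrow> 'b) \<Rightarrow> ('b \<Rightarrow> 'c) \<Rightarrow> bool" where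
  "set_coequalizer X Y Z f g h \<longleftrightarrow>
     (\<forall>x\<in>X. f x \<in> Y \<and> g x \<in> Y) \<and> h ` Y = Z \<and>
     (\<forall>y\<in>Y. \<forall>y'\<in>Y. h y = h y' \<longleftrightarrow>
        (y, y') \<in> ({(f x, g x) | x. x \<in> X} \<union> {(g x, f x) | x. x \<in> X})\<^sup>*)"

definition set_kernel_pair :: "'a set \<Rightarrow> 'b set \<Rightarrow> ('a \<Rightarrow> 'b) \<Rightarrow> ('a \<Rightarrow> 'b) \<Rightarrow> ('b \<Rightarrow> 'c) \<Rightarrow> bool" where
  "set_kernel_pair X Y f g h \<longleftrightarrow>
     bij_betw (\<lambda>x. (f x, g x)) X {(y, y'). y \<in> Y \<and> y' \<in> Y \<and> h y = h y'}"

text \<open>Coequalizer in CLS: f, g, h are CLS morphisms, h is the coequalizer of the underlying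
  maps of sets, and Z carries the final closure structure with respect to h.\<close>
definition cls_coequalizer ::
  "'a set \<Rightarrow> 'a set set \<Rightarrow> 'b set \<Rightarrow> 'b set set \<Rightarrow> 'c set \<Rightarrow> 'c set set \<Rightarrow>
   ('a \<Rightarrow> 'b) \<Rightarrow> ('a \<Rightarrow> 'b) \<Rightarrow> ('b \<Rightarrow> 'c) \<Rightarrow> bool" where
  "cls_coequalizer X CX Y CY Z CZ f g h \<longleftrightarrow>
     cls_morphism X CX Y CY f \<and> cls_morphism X CX Y CY g \<and> cls_morphism Y CY Z CZ h \<and>
     set_coequalizer X Y Z f g h \<and>
     CZ = {Z'. Z' \<subseteq> Z \<and> {y\<in>Y. h y \<in> Z'} \<in> CY}"

end

theory Submission
  imports Defs
begin

text \<open>Since (f, g) is the kernel pair of h, the h-saturation of a set C \<subseteq> Y is the g-image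
  of the f-preimage of C. Hence the preimage under h of h C (resp. of the complement of
  h (Y - C)) is the g-image of a closed (resp. open) subset of X, so it is closed in Y when g is a
  closed (resp. open) map; in the final closure structure on Z this says that h C is closed
  (resp. h (Y - C) is open).\<close>

lemma set_kernel_pair_saturation:
  assumes "set_kernel_pair X Y f g h" and "C \<subseteq> Y"
  shows "{y\<in>Y. h y \<in> h ` C} = g ` {x\<in>X. f x \<in> C}"
proof -
  have pair_image: "(\<lambda>x. (f x, g x)) ` X = {(y, y'). y \<in> Y \<and> y' \<in> Y \<and> h y = h y'}"
    using assms(1) by (simp add: set_kernel_pair_def bij_betw_def)
  show ?thesis
  proof
    show "{y\<in>Y. h y \<in> h ` C} \<subseteq> g ` {x\<in>X. f x \<in> C}"
    proof
      fix y assume "y \<in> {y\<in>Y. h y \<in> h ` C}"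
      then obtain c where "y \<in> Y" "c \<in> C" "h c = h y" by auto
      then have "(c, y) \<in> (\<lambda>x. (f x, g x)) ` X" using pair_image assms(2) by auto
      then show "y \<in> g ` {x\<in>X. f x \<in> C}" using \<open>c \<in> C\<close> by auto
    qed
  next
    show "g ` {x\<in>X. f x \<in> C} \<subseteq> {y\<in>Y. h y \<in> h ` C}"
    proof clarify
      fix x assume "x \<in> X" "f x \<in> C"
      then have "g x \<in> Y" "h (f x) = h (g x)" using pair_image by blast+
      with \<open>f x \<in> C\<close> show "g x \<in> Y \<and> h (g x) \<in> h ` C" by (metis image_eqI)
    qed
  qed
qed

lemma cls_morphism_closed_subset:
  assumes "cls_morphism A CA B CB \<alpha>" and "C \<in> CB"
  shows "C \<subseteq> B"
  using assms by (auto simp: cls_morphism_def closure_space_def)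

lemma cls_morphism_preimage_closed:
  assumes "cls_morphism A CA B CB \<alpha>" and "C \<in> CB"
  shows "{x\<in>A. \<alpha> x \<in> C} \<in> CA"
  using assms by (simp add: cls_morphism_def)

lemma kernel_pair_quotient_closed_map:
  assumes kp: "set_kernel_pair X Y f g h"
    and f: "cls_morphism X CX Y CY f" and g: "cls_closed_map X CX Y CY g"
    and hY: "h ` Y \<subseteq> Z" and CZ: "CZ = {Z'. Z' \<subseteq> Z \<and> {y\<in>Y. h y \<in> Z'} \<in> CY}"
  shows "cls_closed_map Y CY Z CZ h"
  unfolding cls_closed_map_def
proof
  fix C assume C: "C \<in> CY"
  with f have "C \<subseteq> Y" by (rule cls_morphism_closed_subset)
  then have "{y\<in>Y. h y \<in> h ` C} = g ` {x\<in>X. f x \<in> C}"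
    using kp by (simp add: set_kernel_pair_saturation)
  also have "\<dots> \<in> CY"
    using g cls_morphism_preimage_closed[OF f C] by (simp add: cls_closed_map_def)
  finally show "h ` C \<in> CZ" using CZ hY \<open>C \<subseteq> Y\<close> by auto
qed

lemma kernel_pair_quotient_open_map:
  assumes kp: "set_kernel_pair X Y f g h"
    and f: "cls_morphism X CX Y CY f" and g: "cls_open_map X CX Y CY g"
    and hY: "h ` Y \<subseteq> Z" and CZ: "CZ = {Z'. Z' \<subseteq> Z \<and> {y\<in>Y. h y \<in> Z'} \<in> CY}"
  shows "cls_open_map Y CY Z CZ h"
  unfolding cls_open_map_def
proof
  fix C assume C: "C \<in> CY"
  have fX: "\<And>x. x \<in> X \<Longrightarrow> f x \<in> Y" using f by (simp add: cls_morphism_def)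
  have "{y\<in>Y. h y \<in> Z - h ` (Y - C)} = Y - {y\<in>Y. h y \<in> h ` (Y - C)}"
    using hY by auto
  also have "\<dots> = Y - g ` {x\<in>X. f x \<in> Y - C}"
    using kp by (simp add: set_kernel_pair_saturation)
  also have "{x\<in>X. f x \<in> Y - C} = X - {x\<in>X. f x \<in> C}"
    using fX by auto
  also have "Y - g ` (X - {x\<in>X. f x \<in> C}) \<in> CY"
    using g cls_morphism_preimage_closed[OF f C] by (simp add: cls_open_map_def)
  finally show "Z - h ` (Y - C) \<in> CZ" using CZ by auto
qed

theorem proposition6p4:
  fixes X :: "'a set" and CX :: "'a set set"
    and Y :: "'b set" and CY :: "'b set set"
    and Z :: "'c set" and CZ :: "'c set set"
    and f g :: "'a \<Rightarrow> 'b" and h :: "'b \<Rightarrow> 'c"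
  assumes coeq: "cls_coequalizer X CX Y CY Z CZ f g h"
    and exact: "set_coequalizer X Y Z f g h" "set_kernel_pair X Y f g h"
  shows "(f ` X = Y \<and> g ` X = Y \<and> cls_closed_map X CX Y CY f \<and> cls_closed_map X CX Y CY g
            \<longrightarrow> h ` Y = Z \<and> cls_closed_map Y CY Z CZ h)
       \<and> (f ` X = Y \<and> g ` X = Y \<and> cls_open_map X CX Y CY f \<and> cls_open_map X CX Y CY g
            \<longrightarrow> h ` Y = Z \<and> cls_open_map Y CY Z CZ h)"
proof -
  have f: "cls_morphism X CX Y CY f"
    and CZ: "CZ = {Z'. Z' \<subseteq> Z \<and> {y\<in>Y. h y \<in> Z'} \<in> CY}"
    using coeq by (simp_all add: cls_coequalizer_def)
  have hY: "h ` Y = Z" using exact(1) by (simp add: set_coequalizer_def)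
  show ?thesis
    using kernel_pair_quotient_closed_map[OF exact(2) f _ _ CZ]
      kernel_pair_quotient_open_map[OF exact(2) f _ _ CZ] hY
    by simp
qed

end
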